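(* Let $X_1,X_2,\dots$ be i.i.d. copies of a random variable $X$ with values in $[0,C]$, let $r:[0,C]\to[E,D]$ be measurable with $E\le0\le D$, and let $\lambda>0$. Let $c^*$ be the unique root on $\mathbb{R}_+$ of $\Phi(c)=\lambda\,\mathbb{E}[(r(X)-cX)_+]-c$, and for $n\ge1$ let $c_n$ be the unique root on $\mathbb{R}_+$ of $$\Phi_n(c)=\lambda\frac1n\sum_{i=1}^n (r(X_i)-cX_i)_+-c.$$ Then for all $\delta\in(0,1]$ and $n\ge1$, $$\mathbb{P}\Big(c_n-c^*>\lambda(D-E)\sqrt{\tfrac{\ln(1/\delta)}{2n}}\Big)\le\delta.$$
   Context: $(z)_+=\max\{z,0\}$. *)

theory Defs
  imports "HOL-Probability.Probability"
begin

definition pos_part :: "real \<Rightarrow> real" where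
  "pos_part z = max z 0"

definition Phi :: "'a measure \<Rightarrow> real \<Rightarrow> (real \<Rightarrow> real) \<Rightarrow> ('a \<Rightarrow> real) \<Rightarrow> real \<Rightarrow> real" where
  "Phi M lam r X c = lam * (\<integral>\<omega>. pos_part (r (X \<omega>) - c * X \<omega>) \<partial>M) - c"

definition Phi_emp :: "real \<Rightarrow> (real \<Rightarrow> real) \<Rightarrow> nat \<Rightarrow> (nat \<Rightarrow> real) \<Rightarrow> real \<Rightarrow> real" where
  "Phi_emp lam r n x c = lam * ((1 / real n) * (\<Sum>i<n. pos_part (r (x i) - c * x i))) - c"

definition nonneg_root :: "(real \<Rightarrow> real) \<Rightarrow> real" where
  "nonneg_root f = (THE c. c \<ge> 0 \<and> f c = 0)"

end

theory Submission
  imports Defs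
begin

text \<open>Both \<open>\<Phi>\<close> and \<open>\<Phi>\<^sub>n\<close> are continuous on \<open>[0, \<infinity>)\<close>, nonnegative at \<open>0\<close> and decrease
  with slope at most \<open>-1\<close>, so each has a unique nonnegative root, and \<open>a < c\<^sub>n\<close> iff
  \<open>\<Phi>\<^sub>n(a) > 0\<close>. Put \<open>t = \<lambda>\<epsilon>\<close> with \<open>\<epsilon> = (D - E) sqrt (ln (1/\<delta>) / (2n))\<close>. If \<open>c\<^sub>n - c\<^sup>* > t\<close>,
  then \<open>0 < \<Phi>\<^sub>n(c\<^sup>* + t) \<le> \<Phi>\<^sub>n(c\<^sup>*) - t\<close>; as \<open>c\<^sup>* = \<lambda> \<bbbE>[(r(X) - c\<^sup>*X)\<^sub>+]\<close>, this says that the sample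
  mean of the i.i.d. variables \<open>(r(X\<^sub>i) - c\<^sup>*X\<^sub>i)\<^sub>+ \<in> [E, D]\<close> exceeds its expectation by more
  than \<open>\<epsilon>\<close>, which by Hoeffding's inequality has probability at most
  \<open>exp (-2n\<epsilon>\<^sup>2 / (D - E)\<^sup>2) = \<delta>\<close>.\<close>

lemma pos_part_nonneg: "0 \<le> pos_part z"
  by (simp add: pos_part_def)

lemma pos_part_mono: "z \<le> w \<Longrightarrow> pos_part z \<le> pos_part w"
  by (simp add: pos_part_def)

lemma pos_part_le_add_abs_diff: "pos_part z \<le> pos_part w + \<bar>z - w\<bar>"
  by (simp add: pos_part_def)

lemma borel_measurable_pos_part [measurable]:
  "f \<in> borel_measurable M \<Longrightarrow> (\<lambda>x. pos_part (f x)) \<in> borel_measurable M"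
  unfolding pos_part_def by measurable

lemma pos_part_diff_mult_antimono:
  fixes z x a b :: real
  assumes "0 \<le> x" "a \<le> b"
  shows "pos_part (z - b * x) \<le> pos_part (z - a * x)"
  using assms by (intro pos_part_mono) (simp add: mult_right_mono)

lemma pos_part_diff_mult_lipschitz:
  fixes z x c c' C :: real
  assumes "0 \<le> x" "x \<le> C"
  shows "pos_part (z - c * x) \<le> pos_part (z - c' * x) + \<bar>c - c'\<bar> * C"
proof -
  have "\<bar>(z - c * x) - (z - c' * x)\<bar> = \<bar>c - c'\<bar> * x"
    using assms by (simp add: abs_mult left_diff_distrib[symmetric] abs_minus_commute)
  also have "\<dots> \<le> \<bar>c - c'\<bar> * C"
    using assms by (simp add: mult_left_mono)
  finally show ?thesis
    using pos_part_le_add_abs_diff[of "z - c * x" "z - c' * x"] by linarith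
qed

lemma pos_part_diff_mult_bound:
  fixes z x c D :: real
  assumes "z \<le> D" "0 \<le> x" "x \<le> C"
  shows "\<bar>pos_part (z - c * x)\<bar> \<le> pos_part D + \<bar>c\<bar> * C"
proof -
  have "pos_part (z - c * x) \<le> pos_part (z - 0 * x) + \<bar>c - 0\<bar> * C"
    using assms(2,3) by (rule pos_part_diff_mult_lipschitz)
  then show ?thesis
    using assms(1) pos_part_mono[of z D] by (simp add: pos_part_nonneg)
qed

context
  fixes f :: "real \<Rightarrow> real"
  assumes continuous: "continuous_on {0..} f"
    and nonneg_at_0: "0 \<le> f 0"
    and slope: "\<And>a b. 0 \<le> a \<Longrightarrow> a \<le> b \<Longrightarrow> f b \<le> f a - (b - a)"
begin

lemma nonneg_root: "0 \<le> nonneg_root f \<and> f (nonneg_root f) = 0"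
proof -
  have "f (f 0) \<le> 0"
    using slope[of 0 "f 0"] nonneg_at_0 by simp
  moreover have "continuous_on {0..f 0} f"
    using continuous by (rule continuous_on_subset) auto
  ultimately obtain c where c: "0 \<le> c" "f c = 0"
    using IVT2'[of f "f 0" 0 0] nonneg_at_0 by blast
  have "d = c" if "0 \<le> d" "f d = 0" for d
    using slope[of c d] slope[of d c] that c by (cases "d \<le> c") auto
  then have "nonneg_root f = c"
    unfolding nonneg_root_def using c by blast
  then show ?thesis
    using c by simp
qed

lemma less_nonneg_root_iff:
  assumes "0 \<le> a"
  shows "a < nonneg_root f \<longleftrightarrow> 0 < f a"
  using nonneg_root slope[of a "nonneg_root f"] slope[of "nonneg_root f" a] assms
  by (cases "a < nonneg_root f") auto

end

lemma continuous_on_Phi_emp: "continuous_on S (Phi_emp lam r n x)"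
  unfolding Phi_emp_def pos_part_def by (intro continuous_intros)

lemma Phi_emp_at_0_nonneg:
  assumes "0 \<le> lam"
  shows "0 \<le> Phi_emp lam r n x 0"
  unfolding Phi_emp_def using assms by (simp add: sum_nonneg pos_part_nonneg)

lemma Phi_emp_slope:
  assumes "0 \<le> lam" "\<And>i. 0 \<le> x i" "a \<le> b"
  shows "Phi_emp lam r n x b \<le> Phi_emp lam r n x a - (b - a)"
proof -
  have "(\<Sum>i<n. pos_part (r (x i) - b * x i)) \<le> (\<Sum>i<n. pos_part (r (x i) - a * x i))"
    using assms(2,3) by (intro sum_mono pos_part_diff_mult_antimono)
  then show ?thesis
    unfolding Phi_emp_def using assms(1) by (simp add: mult_left_mono divide_right_mono)
qed

lemma less_nonneg_root_Phi_emp_iff: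
  assumes "0 \<le> lam" "\<And>i. 0 \<le> x i" "0 \<le> a"
  shows "a < nonneg_root (Phi_emp lam r n x) \<longleftrightarrow> 0 < Phi_emp lam r n x a"
  using assms
  by (intro less_nonneg_root_iff continuous_on_Phi_emp Phi_emp_at_0_nonneg Phi_emp_slope)

lemma Phi_emp_pos_imp_sample_mean_gt:
  assumes "0 < lam" "\<And>i. 0 \<le> x i" "0 \<le> \<epsilon>" "0 < Phi_emp lam r n x (c + lam * \<epsilon>)"
  shows "c / lam + \<epsilon> < (\<Sum>i<n. pos_part (r (x i) - c * x i)) / n"
proof -
  have "0 < Phi_emp lam r n x c - lam * \<epsilon>"
    using Phi_emp_slope[of lam x c "c + lam * \<epsilon>" r n] assms by (simp add: mult_nonneg_nonneg)
  then have "c + lam * \<epsilon> < lam * ((\<Sum>i<n. pos_part (r (x i) - c * x i)) / n)"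
    unfolding Phi_emp_def by simp
  then show ?thesis
    using assms(1) by (simp add: field_simps)
qed

lemma measurable_comp_restrict_space:
  assumes "f \<in> measurable (restrict_space N S) K" "g \<in> measurable M N" "g \<in> space M \<rightarrow> S"
  shows "(\<lambda>x. f (g x)) \<in> measurable M K"
  using measurable_comp[OF measurable_restrict_space2[OF assms(3,2)] assms(1)]
  by (simp add: comp_def)

locale population_model = prob_space M for M :: "'a measure" +
  fixes X :: "'a \<Rightarrow> real" and r :: "real \<Rightarrow> real" and C D :: real
  assumes X_measurable [measurable]: "X \<in> borel_measurable M"
    and X_range: "\<And>\<omega>. \<omega> \<in> space M \<Longrightarrow> X \<omega> \<in> {0..C}"
    and r_measurable: "r \<in> borel_measurable (restrict_space borel {0..C})"
    and r_le: "\<And>x. x \<in> {0..C} \<Longrightarrow> r x \<le> D"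
begin

lemma r_X_measurable [measurable]: "(\<lambda>\<omega>. r (X \<omega>)) \<in> borel_measurable M"
  by (rule measurable_comp_restrict_space[OF r_measurable X_measurable]) (use X_range in auto)

lemma integrable_pos_part: "integrable M (\<lambda>\<omega>. pos_part (r (X \<omega>) - c * X \<omega>))"
  using X_range r_le
  by (intro integrable_const_bound[where B = "pos_part D + \<bar>c\<bar> * C"] AE_I2)
     (auto intro!: pos_part_diff_mult_bound)

lemma integral_pos_part_lipschitz:
  "(\<integral>\<omega>. pos_part (r (X \<omega>) - c * X \<omega>) \<partial>M)
     \<le> (\<integral>\<omega>. pos_part (r (X \<omega>) - c' * X \<omega>) \<partial>M) + \<bar>c - c'\<bar> * C"
proof -
  have "(\<integral>\<omega>. pos_part (r (X \<omega>) - c * X \<omega>) \<partial>M)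
      \<le> (\<integral>\<omega>. pos_part (r (X \<omega>) - c' * X \<omega>) + \<bar>c - c'\<bar> * C \<partial>M)"
    using X_range
    by (intro integral_mono integrable_pos_part Bochner_Integration.integrable_add
        pos_part_diff_mult_lipschitz) auto
  then show ?thesis
    using integrable_pos_part by (simp add: prob_space)
qed

lemma continuous_on_Phi:
  assumes "0 \<le> lam"
  shows "continuous_on S (Phi M lam r X)"
proof -
  obtain \<omega> where "\<omega> \<in> space M"
    using not_empty by blast
  then have "0 \<le> C"
    using X_range by force
  have "(lam * C)-lipschitz_on UNIV (\<lambda>c. lam * (\<integral>\<omega>. pos_part (r (X \<omega>) - c * X \<omega>) \<partial>M))"
  proof (rule lipschitz_onI)
    fix c c' :: real
    have "\<bar>(\<integral>\<omega>. pos_part (r (X \<omega>) - c * X \<omega>) \<partial>M) - (\<integral>\<omega>. pos_part (r (X \<omega>) - c' * X \<omega>) \<partial>M)\<bar>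
        \<le> C * \<bar>c - c'\<bar>"
      using integral_pos_part_lipschitz[of c c'] integral_pos_part_lipschitz[of c' c]
      by (simp add: abs_minus_commute mult.commute)
    then show "dist (lam * (\<integral>\<omega>. pos_part (r (X \<omega>) - c * X \<omega>) \<partial>M))
        (lam * (\<integral>\<omega>. pos_part (r (X \<omega>) - c' * X \<omega>) \<partial>M)) \<le> lam * C * dist c c'"
      using assms by (simp add: dist_real_def abs_mult right_diff_distrib[symmetric]
          mult.assoc mult_left_mono)
    show "0 \<le> lam * C"
      using assms \<open>0 \<le> C\<close> by simp
  qed
  then have "continuous_on UNIV (Phi M lam r X)"
    unfolding Phi_def by (intro continuous_on_diff continuous_on_id lipschitz_on_continuous_on)
  then show ?thesis
    by (rule continuous_on_subset) simp
qed

lemma Phi_at_0_nonneg: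
  assumes "0 \<le> lam"
  shows "0 \<le> Phi M lam r X 0"
  unfolding Phi_def using assms by (simp add: pos_part_nonneg)

lemma Phi_slope:
  assumes "0 \<le> lam" "a \<le> b"
  shows "Phi M lam r X b \<le> Phi M lam r X a - (b - a)"
proof -
  have "(\<integral>\<omega>. pos_part (r (X \<omega>) - b * X \<omega>) \<partial>M) \<le> (\<integral>\<omega>. pos_part (r (X \<omega>) - a * X \<omega>) \<partial>M)"
    using X_range assms(2)
    by (intro integral_mono integrable_pos_part pos_part_diff_mult_antimono) auto
  then show ?thesis
    unfolding Phi_def using assms(1) by (simp add: mult_left_mono)
qed

lemma nonneg_root_Phi:
  assumes "0 \<le> lam"
  shows "0 \<le> nonneg_root (Phi M lam r X) \<and> Phi M lam r X (nonneg_root (Phi M lam r X)) = 0"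
  using assms by (intro nonneg_root continuous_on_Phi Phi_at_0_nonneg Phi_slope)

end

lemma (in prob_space) indep_vars_measurable:
  "indep_vars M' X I \<Longrightarrow> i \<in> I \<Longrightarrow> X i \<in> measurable M (M' i)"
  unfolding indep_vars_def by blast

lemma (in prob_space) Hoeffding_iid_comp_ge:
  fixes Xs :: "nat \<Rightarrow> 'a \<Rightarrow> real" and g :: "real \<Rightarrow> real" and a b \<epsilon> :: real and n :: nat
  assumes indep: "indep_vars (\<lambda>_. borel) Xs UNIV"
    and ident: "\<And>i. distr M borel (Xs i) = distr M borel X"
    and [measurable]: "X \<in> borel_measurable M" "g \<in> borel_measurable borel"
    and g_range: "\<And>x. g x \<in> {a..b}"
    and "a < b" "0 \<le> \<epsilon>" "0 < n"
  shows "prob {\<omega> \<in> space M. expectation (\<lambda>\<omega>. g (X \<omega>)) + \<epsilon> \<le> (\<Sum>i<n. g (Xs i \<omega>)) / n}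
    \<le> exp (-2 * n * \<epsilon>\<^sup>2 / (b - a)\<^sup>2)"
proof -
  have [measurable]: "Xs i \<in> borel_measurable M" for i
    using indep by (rule indep_vars_measurable) simp
  interpret Hoeffding_ineq_iid M "{..<n}" "\<lambda>i \<omega>. g (Xs i \<omega>)" "\<lambda>\<omega>. g (X \<omega>)" a b
    "expectation (\<lambda>\<omega>. g (X \<omega>))"
  proof unfold_locales
    show "indep_vars (\<lambda>_. borel) (\<lambda>i \<omega>. g (Xs i \<omega>)) {..<n}"
      by (rule indep_vars_compose2[OF indep_vars_subset[OF indep]]) auto
    show "distr M borel (\<lambda>\<omega>. g (Xs i \<omega>)) = distr M borel (\<lambda>\<omega>. g (X \<omega>))" for i
      using distr_distr[of g borel borel "Xs i" M] distr_distr[of g borel borel X M]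
      by (simp add: ident comp_def)
  qed (use g_range in auto)
  show ?thesis
    using Hoeffding_ineq_ge'[of \<epsilon>] assms(6-8) by (simp add: lessThan_empty_iff)
qed

lemma Hoeffding_exponent_confidence:
  fixes a b \<delta> :: real and n :: nat
  assumes "a < b" "0 < \<delta>" "\<delta> \<le> 1" "0 < n"
  shows "exp (-2 * n * ((b - a) * sqrt (ln (1 / \<delta>) / (2 * real n)))\<^sup>2 / (b - a)\<^sup>2) = \<delta>"
proof -
  have "((b - a) * sqrt (ln (1 / \<delta>) / (2 * real n)))\<^sup>2 = (b - a)\<^sup>2 * (ln (1 / \<delta>) / (2 * real n))"
    using assms by (simp add: power_mult_distrib)
  then show ?thesis
    using assms by (simp add: ln_div field_simps)
qed

lemma (in prob_space) Hoeffding_iid_confidence: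
  fixes Xs :: "nat \<Rightarrow> 'a \<Rightarrow> real" and g :: "real \<Rightarrow> real" and a b \<delta> :: real and n :: nat
  assumes indep: "indep_vars (\<lambda>_. borel) Xs UNIV"
    and ident: "\<And>i. distr M borel (Xs i) = distr M borel X"
    and X_measurable [measurable]: "X \<in> borel_measurable M"
    and S_borel [measurable]: "S \<in> sets borel"
    and g_measurable: "g \<in> borel_measurable (restrict_space borel S)"
    and X_in_S: "\<And>\<omega>. \<omega> \<in> space M \<Longrightarrow> X \<omega> \<in> S"
    and Xs_in_S: "\<And>i \<omega>. \<omega> \<in> space M \<Longrightarrow> Xs i \<omega> \<in> S"
    and g_range: "\<And>x. x \<in> S \<Longrightarrow> g x \<in> {a..b}"
    and \<delta>: "0 < \<delta>" "\<delta> \<le> 1" and n: "0 < n"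
  shows "prob {\<omega> \<in> space M. expectation (\<lambda>\<omega>. g (X \<omega>)) + (b - a) * sqrt (ln (1 / \<delta>) / (2 * real n))
                < (\<Sum>i<n. g (Xs i \<omega>)) / real n} \<le> \<delta>"
    (is "prob {\<omega> \<in> space M. ?\<mu> + ?\<epsilon> < ?mean \<omega>} \<le> \<delta>")
proof -
  obtain \<omega> where "\<omega> \<in> space M"
    using not_empty by blast
  then have "a \<le> b"
    using g_range X_in_S by fastforce
  then consider "a = b" | "a < b"
    by linarith
  then show ?thesis
  proof cases
    case 1
    \<comment> \<open>Degenerate range: the sample mean equals the expectation, so the strict excess never occurs.\<close>
    then have g_const: "g x = a" if "x \<in> S" for x
      using g_range[OF that] by simp
    have "?\<mu> = a"
      using X_in_S g_const by (simp add: prob_space cong: Bochner_Integration.integral_cong)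
    moreover have "?mean \<omega> = a" if "\<omega> \<in> space M" for \<omega>
      using Xs_in_S[OF that] g_const n by simp
    ultimately have "{\<omega> \<in> space M. ?\<mu> + ?\<epsilon> < ?mean \<omega>} = {}"
      using 1 by auto
    then show ?thesis
      using \<delta> by (simp only: measure_empty)
  next
    case 2
    define g' where "g' = (\<lambda>x. if x \<in> S then g x else a)"
    have [measurable]: "g' \<in> borel_measurable borel"
      using g_measurable measurable_restrict_space_iff[of S borel a borel g] by (simp add: g'_def)
    have [measurable]: "Xs i \<in> borel_measurable M" for i
      using indep by (rule indep_vars_measurable) simp
    have "expectation (\<lambda>\<omega>. g' (X \<omega>)) = ?\<mu>"
      using X_in_S by (auto simp: g'_def intro: Bochner_Integration.integral_cong)
    moreover have "g' x \<in> {a..b}" for x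
      using g_range 2 by (simp add: g'_def)
    moreover have "0 \<le> ?\<epsilon>"
      using 2 \<delta> by simp
    ultimately have "prob {\<omega> \<in> space M. ?\<mu> + ?\<epsilon> \<le> (\<Sum>i<n. g' (Xs i \<omega>)) / n} \<le> \<delta>"
      using Hoeffding_iid_comp_ge[OF indep ident X_measurable, of g' a b ?\<epsilon> n]
        Hoeffding_exponent_confidence[OF 2 \<delta> n] 2 n by simp
    moreover have "{\<omega> \<in> space M. ?\<mu> + ?\<epsilon> < ?mean \<omega>}
        \<subseteq> {\<omega> \<in> space M. ?\<mu> + ?\<epsilon> \<le> (\<Sum>i<n. g' (Xs i \<omega>)) / n}"
      using Xs_in_S by (auto simp: g'_def)
    moreover have "{\<omega> \<in> space M. ?\<mu> + ?\<epsilon> \<le> (\<Sum>i<n. g' (Xs i \<omega>)) / n} \<in> sets M"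
      by measurable
    ultimately show ?thesis
      by (meson finite_measure_mono order_trans)
  qed
qed

locale iid_sample_model = population_model +
  fixes Xs :: "nat \<Rightarrow> 'a \<Rightarrow> real" and E :: real
  assumes indep: "indep_vars (\<lambda>_. borel) Xs UNIV"
    and ident: "\<And>i. distr M borel (Xs i) = distr M borel X"
    and Xs_range: "\<And>i \<omega>. \<omega> \<in> space M \<Longrightarrow> Xs i \<omega> \<in> {0..C}"
    and r_ge: "\<And>x. x \<in> {0..C} \<Longrightarrow> E \<le> r x"
    and E_nonpos: "E \<le> 0"
    and D_nonneg: "0 \<le> D"
begin

lemma Xs_measurable [measurable]: "Xs i \<in> borel_measurable M"
  using indep by (rule indep_vars_measurable) simp

lemma r_Xs_measurable [measurable]: "(\<lambda>\<omega>. r (Xs i \<omega>)) \<in> borel_measurable M"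
  by (rule measurable_comp_restrict_space[OF r_measurable Xs_measurable]) (use Xs_range in auto)

lemma prob_sample_mean_excess_le:
  assumes "0 \<le> c" "0 < \<delta>" "\<delta> \<le> 1" "0 < n"
  shows "prob {\<omega> \<in> space M.
      (\<integral>\<omega>. pos_part (r (X \<omega>) - c * X \<omega>) \<partial>M) + (D - E) * sqrt (ln (1 / \<delta>) / (2 * real n))
        < (\<Sum>i<n. pos_part (r (Xs i \<omega>) - c * Xs i \<omega>)) / real n} \<le> \<delta>"
proof (rule Hoeffding_iid_confidence[OF indep ident X_measurable,
      where g = "\<lambda>x. pos_part (r x - c * x)" and S = "{0..C}"])
  have [measurable]: "(\<lambda>x. x) \<in> borel_measurable (restrict_space borel {0..C})"
    by (rule measurable_restrict_space1) simp
  show "(\<lambda>x. pos_part (r x - c * x)) \<in> borel_measurable (restrict_space borel {0..C})"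
    using r_measurable by measurable
  show "pos_part (r x - c * x) \<in> {E..D}" if "x \<in> {0..C}" for x
    using r_ge[OF that] r_le[OF that] E_nonpos D_nonneg that mult_nonneg_nonneg[OF assms(1), of x]
    by (auto simp: pos_part_def)
qed (use assms X_range Xs_range in auto)

lemma root_excess_event_eq:
  assumes "0 \<le> lam" "0 \<le> c" "0 \<le> t"
  shows "{\<omega> \<in> space M. t < nonneg_root (Phi_emp lam r n (\<lambda>i. Xs i \<omega>)) - c}
    = {\<omega> \<in> space M. 0 < Phi_emp lam r n (\<lambda>i. Xs i \<omega>) (c + t)}"
proof (rule Collect_cong, rule conj_cong[OF refl])
  fix \<omega> assume "\<omega> \<in> space M"
  then have "c + t < nonneg_root (Phi_emp lam r n (\<lambda>i. Xs i \<omega>))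
      \<longleftrightarrow> 0 < Phi_emp lam r n (\<lambda>i. Xs i \<omega>) (c + t)"
    using assms Xs_range by (intro less_nonneg_root_Phi_emp_iff) auto
  then show "t < nonneg_root (Phi_emp lam r n (\<lambda>i. Xs i \<omega>)) - c
      \<longleftrightarrow> 0 < Phi_emp lam r n (\<lambda>i. Xs i \<omega>) (c + t)"
    by linarith
qed

end

theorem proposition3p1:
  fixes M :: "'a measure" and X :: "'a \<Rightarrow> real" and Xs :: "nat \<Rightarrow> 'a \<Rightarrow> real"
    and r :: "real \<Rightarrow> real" and C E D lam \<delta> :: real and n :: nat
  assumes "prob_space M"
    and "X \<in> borel_measurable M"
    and "\<And>\<omega>. \<omega> \<in> space M \<Longrightarrow> X \<omega> \<in> {0..C}"
    and "\<And>i. Xs i \<in> borel_measurable M"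
    and "\<And>i \<omega>. \<omega> \<in> space M \<Longrightarrow> Xs i \<omega> \<in> {0..C}"
    and "prob_space.indep_vars M (\<lambda>_. borel) Xs UNIV"
    and "\<And>i. distr M borel (Xs i) = distr M borel X"
    and "r \<in> borel_measurable (restrict_space borel {0..C})"
    and "\<And>x. x \<in> {0..C} \<Longrightarrow> E \<le> r x \<and> r x \<le> D"
    and "E \<le> 0" and "0 \<le> D"
    and "lam > 0"
    and "0 < \<delta>" and "\<delta> \<le> 1"
    and "n \<ge> 1"
  shows "{\<omega> \<in> space M. nonneg_root (Phi_emp lam r n (\<lambda>i. Xs i \<omega>))
                          - nonneg_root (Phi M lam r X)
                        > lam * (D - E) * sqrt (ln (1 / \<delta>) / (2 * real n))} \<in> sets M
    \<and> measure M {\<omega> \<in> space M. nonneg_root (Phi_emp lam r n (\<lambda>i. Xs i \<omega>))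
                          - nonneg_root (Phi M lam r X)
                        > lam * (D - E) * sqrt (ln (1 / \<delta>) / (2 * real n))} \<le> \<delta>"
proof -
  interpret iid_sample_model M X r C D Xs E
    using assms(1-3,5-11)
    by (intro iid_sample_model.intro population_model.intro population_model_axioms.intro
        iid_sample_model_axioms.intro) auto
  define c_star where "c_star = nonneg_root (Phi M lam r X)"
  define \<epsilon> where "\<epsilon> = (D - E) * sqrt (ln (1 / \<delta>) / (2 * real n))"
  have c_star: "0 \<le> c_star" "c_star / lam = (\<integral>\<omega>. pos_part (r (X \<omega>) - c_star * X \<omega>) \<partial>M)"
    using nonneg_root_Phi[of lam] assms(12)
    unfolding c_star_def[symmetric] Phi_def by (auto simp: field_simps)
  have "0 \<le> \<epsilon>"
    unfolding \<epsilon>_def using assms(10,11,13,14) by simp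
  have "{\<omega> \<in> space M. lam * \<epsilon> < nonneg_root (Phi_emp lam r n (\<lambda>i. Xs i \<omega>)) - c_star}
      = {\<omega> \<in> space M. 0 < Phi_emp lam r n (\<lambda>i. Xs i \<omega>) (c_star + lam * \<epsilon>)}"
    (is "_ = ?A")
    using assms(12) c_star(1) \<open>0 \<le> \<epsilon>\<close> by (intro root_excess_event_eq) auto
  moreover have "?A \<in> sets M"
    unfolding Phi_emp_def by measurable
  moreover have "prob {\<omega> \<in> space M. c_star / lam + \<epsilon>
      < (\<Sum>i<n. pos_part (r (Xs i \<omega>) - c_star * Xs i \<omega>)) / real n} \<le> \<delta>"
    (is "prob ?B \<le> _")
    unfolding c_star(2) \<epsilon>_def using c_star(1) assms(13-15) by (intro prob_sample_mean_excess_le) auto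
  moreover have "?A \<subseteq> ?B"
    using assms(12) Xs_range \<open>0 \<le> \<epsilon>\<close> by (auto intro!: Phi_emp_pos_imp_sample_mean_gt)
  moreover have "?B \<in> sets M"
    by measurable
  ultimately show ?thesis
    unfolding c_star_def[symmetric] \<epsilon>_def[symmetric] mult.assoc
    by (metis (no_types, lifting) finite_measure_mono order_trans)
qed

end
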